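(* Let $p$ be an odd prime and let $m,k$ be positive integers such that $m/\gcd(m,k)$ is odd. For $x,y\in\mathbb{F}_{p^m}$ put $x\circ_k y=x^{p^k}y+y^{p^k}x$. Let $\alpha$ be a non-square element of $\mathbb{F}_{p^m}$ and $\sigma$ a field automorphism of $\mathbb{F}_{p^m}$. For $(a,b),(c,d)\in\mathbb{F}_{p^m}^2$ define $$(a,b)*(c,d)=\big(a\circ_k c+\alpha\,\sigma(b\circ_k d),\ ad+bc\big).$$ Then $(\mathbb{F}_{p^m}^2,+,* )$ (with componentwise addition, i.e. the additive group of $\mathbb{F}_{p^{2m}}$) is a presemifield.
   Context: A (finite) presemifield is a finite set with an addition making it an abelian group and a multiplication $*$ satisfying both distributive laws $(a+b)*c=a*c+b*c$, $a*(b+c)=a*b+a*c$, and such that $x*y=0$ implies $x=0$ or $y=0$ (equivalently, for nonzero elements the left and right multiplication maps are bijective); a multiplicative identity is not required. *)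

theory Defs
  imports Main "HOL-Library.Product_Plus" "HOL-Computational_Algebra.Primes"
begin

definition presemifield :: "('b::ab_group_add \<Rightarrow> 'b \<Rightarrow> 'b) \<Rightarrow> bool" where
  "presemifield mul \<longleftrightarrow> finite (UNIV :: 'b set) \<and>
     (\<forall>a b c. mul (a + b) c = mul a c + mul b c) \<and>
     (\<forall>a b c. mul a (b + c) = mul a b + mul a c) \<and>
     (\<forall>x y. mul x y = 0 \<longrightarrow> x = 0 \<or> y = 0)"

definition field_automorphism :: "('a::field \<Rightarrow> 'a) \<Rightarrow> bool" where
  "field_automorphism \<sigma> \<longleftrightarrow> bij \<sigma> \<and>
     (\<forall>x y. \<sigma> (x + y) = \<sigma> x + \<sigma> y) \<and> (\<forall>x y. \<sigma> (x * y) = \<sigma> x * \<sigma> y)"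

definition circ_k :: "nat \<Rightarrow> nat \<Rightarrow> 'a::field \<Rightarrow> 'a \<Rightarrow> 'a" where
  "circ_k p k x y = x ^ (p ^ k) * y + y ^ (p ^ k) * x"

definition star_mult :: "nat \<Rightarrow> nat \<Rightarrow> 'a::field \<Rightarrow> ('a \<Rightarrow> 'a) \<Rightarrow> 'a \<times> 'a \<Rightarrow> 'a \<times> 'a \<Rightarrow> 'a \<times> 'a" where
  "star_mult p k \<alpha> \<sigma> u v =
     (case u of (a, b) \<Rightarrow> case v of (c, d) \<Rightarrow>
       (circ_k p k a c + \<alpha> * \<sigma> (circ_k p k b d), a * d + b * c))"

end

theory Submission
  imports Defs "HOL-Number_Theory.Residues" "HOL-Decision_Procs.Algebra_Aux"
begin

text \<open>Write q = p^k. Bi-additivity is the additivity of the Frobenius power x \<mapsto> x^q.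
  If (a, b) * (c, d) = 0 with a \<noteq> 0, the second coordinate forces (c, d) = s (a, -b), and the
  first one becomes a^(q+1) u = \<alpha> \<sigma>(b)^(q+1) \<sigma>(u) with u = s + s^q. Iterating s^q = -s gives
  s^(q^t) = (-1)^t s; for t = m / gcd m k the exponent q^t is a power of p^m and t is odd, so
  u = 0 only for s = 0. Otherwise, since q + 1 is even and u, \<sigma>(u) have the same quadratic
  character, u \<sigma>(u) is a square, and then so is \<alpha>.\<close>

lemma Units_cring_class_ops_field: "Units (cring_class_ops :: 'a::field ring) = - {0}"
  by (auto simp: Units_def cring_class_ops_def) (metis left_inverse right_inverse)

(* Primes.finite_field_power_card_eq_same needs the sort finite_field, which a type variable of
   sort {field, finite} lacks; the units of cring_class_ops give Fermat's little theorem instead. *)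
lemma finite_field_power_card_eq_self:
  fixes x :: "'a::{field,finite}"
  shows "x ^ card (UNIV :: 'a set) = x"
proof (cases "x = 0")
  case False
  have "x ^ card (- {0 :: 'a}) = 1"
    using cring_class.units_power_order_eq_one[of x] False by (simp add: Units_cring_class_ops_field)
  moreover have "card (UNIV :: 'a set) = Suc (card (- {0 :: 'a}))"
    using finite_UNIV_card_ge_0[where 'a = 'a] by (simp add: Compl_eq_Diff_UNIV card_Suc_Diff1)
  ultimately show ?thesis by simp
qed (simp add: finite_UNIV_card_ge_0)

lemma finite_field_power_card_power_eq_self:
  fixes x :: "'a::{field,finite}"
  shows "x ^ (card (UNIV :: 'a set) ^ n) = x"
  by (induction n) (simp_all add: finite_field_power_card_eq_self power_mult)

lemma CHAR_eq_if_card_eq_prime_power: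
  assumes "prime p" and "card (UNIV :: 'a::{field,finite} set) = p ^ m"
  shows "CHAR('a) = p"
proof -
  have "prime CHAR('a)"
    by (simp add: finite_imp_CHAR_pos prime_CHAR_semidom)
  moreover have "CHAR('a) dvd p ^ m"
    using CHAR_dvd_CARD[where 'a = 'a] assms(2) by simp
  ultimately show ?thesis
    using assms(1) by (metis prime_dvd_power primes_dvd_imp_eq)
qed

lemma two_neq_zero_if_odd_CHAR:
  assumes "odd CHAR('a::semiring_1)"
  shows "(2 :: 'a) \<noteq> 0"
proof
  assume "(2 :: 'a) = 0"
  then have "CHAR('a) dvd 2"
    by (metis of_nat_eq_0_iff_char_dvd of_nat_numeral)
  then have "CHAR('a) \<le> 2"
    by (rule dvd_imp_le) simp
  with assms have "CHAR('a) = 1"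
    by presburger
  then show False
    using of_nat_CHAR[where 'a = 'a] by simp
qed

lemma power_power_eq_minus_one_power_mult:
  fixes z :: "'a::comm_ring_1"
  assumes "odd q" and "z ^ q = - z"
  shows "z ^ (q ^ j) = (-1) ^ j * z"
proof (induction j)
  case (Suc j)
  have "z ^ (q ^ Suc j) = (z ^ (q ^ j)) ^ q"
    by (metis power_Suc2 power_mult)
  also have "\<dots> = (-1) ^ j * z ^ q"
    using assms(1) by (simp add: Suc power_mult_distrib minus_one_power_iff flip: power_mult)
  finally show ?case
    using assms(2) by simp
qed simp

lemma frobenius_eq_neg_imp_zero:
  fixes z :: "'a::{field,finite}"
  assumes "prime p" and "odd p" and "card (UNIV :: 'a set) = p ^ m"
    and "odd (m div gcd m k)" and "z ^ (p ^ k) = - z"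
  shows "z = 0"
proof -
  define t where "t = m div gcd m k"
  have "k * t = m * (k div gcd m k)"
    unfolding t_def by (metis div_mult_swap dvd_div_mult gcd_dvd1 gcd_dvd2 mult.commute)
  then have "(p ^ k) ^ t = card (UNIV :: 'a set) ^ (k div gcd m k)"
    using assms(3) by (simp flip: power_mult)
  then have "z = (-1) ^ t * z"
    using power_power_eq_minus_one_power_mult[of "p ^ k" z t] assms(2,5)
    by (simp add: finite_field_power_card_power_eq_self)
  also have "\<dots> = - z"
    using assms(4) by (simp add: t_def)
  finally have "2 * z = 0"
    by simp
  moreover have "(2 :: 'a) \<noteq> 0"
    using assms(1-3) by (simp add: two_neq_zero_if_odd_CHAR CHAR_eq_if_card_eq_prime_power)
  ultimately show ?thesis
    by simp
qed

lemma circ_k_add_left: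
  assumes "prime p" and "CHAR('a::field) = p"
  shows "circ_k p k (x + y) z = circ_k p k x z + circ_k p k (y :: 'a) z"
  using assms by (simp add: circ_k_def freshmans_dream' algebra_simps)

lemma circ_k_add_right:
  assumes "prime p" and "CHAR('a::field) = p"
  shows "circ_k p k z (x + y) = circ_k p k z x + circ_k p k z (y :: 'a)"
  using assms by (simp add: circ_k_def freshmans_dream' algebra_simps)

lemma circ_k_mult_right_self:
  "circ_k p k a (a * s) = a ^ (p ^ k) * a * (s + s ^ (p ^ k) :: 'a::field)"
  by (simp add: circ_k_def algebra_simps)

lemma circ_k_mult_right_self_neg:
  assumes "odd p"
  shows "circ_k p k a (- (a * s)) = - (a ^ (p ^ k) * a * (s + s ^ (p ^ k)) :: 'a::field)"
  using circ_k_mult_right_self[of p k a "- s"] assms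
  by (simp add: algebra_simps)

lemma circ_k_eq_0_imp:
  fixes x y :: "'a::field"
  assumes "\<And>z :: 'a. z ^ (p ^ k) = - z \<Longrightarrow> z = 0" and "circ_k p k x y = 0"
  shows "x = 0 \<or> y = 0"
proof (cases "x = 0")
  case False
  then have "x ^ (p ^ k) * x * (y / x + (y / x) ^ (p ^ k)) = 0"
    using assms(2) by (simp flip: circ_k_mult_right_self)
  then have "(y / x) ^ (p ^ k) = - (y / x)"
    using False by (simp add: eq_neg_iff_add_eq_0 add.commute)
  then have "y / x = 0"
    by (rule assms(1))
  with False show ?thesis
    by simp
qed simp

lemma field_automorphism_add:
  "field_automorphism \<sigma> \<Longrightarrow> \<sigma> (x + y) = \<sigma> x + \<sigma> y"
  by (simp add: field_automorphism_def)

lemma field_automorphism_mult: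
  "field_automorphism \<sigma> \<Longrightarrow> \<sigma> (x * y) = \<sigma> x * \<sigma> y"
  by (simp add: field_automorphism_def)

lemma field_automorphism_zero:
  "field_automorphism \<sigma> \<Longrightarrow> \<sigma> 0 = 0"
  using field_automorphism_add[of \<sigma> 0 0] by (metis add_cancel_right_right)

lemma field_automorphism_minus:
  "field_automorphism \<sigma> \<Longrightarrow> \<sigma> (- x) = - \<sigma> x"
  using field_automorphism_add[of \<sigma> x "- x"] field_automorphism_zero[of \<sigma>]
  by (simp add: eq_neg_iff_add_eq_0 add.commute)

lemma field_automorphism_eq_iff:
  "field_automorphism \<sigma> \<Longrightarrow> \<sigma> x = \<sigma> y \<longleftrightarrow> x = y"
  by (auto simp: field_automorphism_def bij_def inj_eq)

lemma field_automorphism_eq_0_iff: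
  "field_automorphism \<sigma> \<Longrightarrow> \<sigma> x = 0 \<longleftrightarrow> x = 0"
  by (metis field_automorphism_eq_iff field_automorphism_zero)

lemma field_automorphism_one:
  assumes "field_automorphism \<sigma>"
  shows "\<sigma> 1 = 1"
proof -
  have "\<sigma> 1 * \<sigma> 1 = \<sigma> 1 * 1"
    using field_automorphism_mult[OF assms, of 1 1] by simp
  moreover have "\<sigma> 1 \<noteq> 0"
    using assms by (simp add: field_automorphism_eq_0_iff)
  ultimately show ?thesis
    by simp
qed

lemma field_automorphism_power:
  "field_automorphism \<sigma> \<Longrightarrow> \<sigma> (x ^ n) = \<sigma> x ^ n"
  by (induction n) (simp_all add: field_automorphism_one field_automorphism_mult)

lemma field_automorphism_square_iff:
  assumes "field_automorphism \<sigma>"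
  shows "(\<exists>w. \<sigma> u = w ^ 2) \<longleftrightarrow> (\<exists>w. u = w ^ 2)"
proof
  assume "\<exists>w. \<sigma> u = w ^ 2"
  then obtain w where "\<sigma> u = w ^ 2" ..
  moreover obtain w' where "w = \<sigma> w'"
    using assms by (metis field_automorphism_def bij_pointE)
  ultimately have "\<sigma> u = \<sigma> (w' ^ 2)"
    using assms by (simp add: field_automorphism_power)
  then show "\<exists>w. u = w ^ 2"
    using assms by (auto simp: field_automorphism_eq_iff)
qed (auto simp: assms field_automorphism_power)

lemma card_nonzero_le_double_card_nonzero_squares:
  "card (- {0 :: 'a::{field,finite}}) \<le> 2 * card ((\<lambda>y. y ^ 2) ` (- {0 :: 'a}))"
proof -
  let ?Q = "(\<lambda>y. y ^ 2) ` (- {0 :: 'a})"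
  have square_roots: "card {y. y ^ 2 = w ^ 2} \<le> 2" for w :: 'a
  proof -
    have "{y. y ^ 2 = w ^ 2} \<subseteq> {w, - w}"
      by (auto simp: power2_eq_iff)
    then have "card {y. y ^ 2 = w ^ 2} \<le> card {w, - w}"
      by (intro card_mono) auto
    also have "\<dots> \<le> 2"
      by (simp add: card_insert_if)
    finally show ?thesis .
  qed
  have "card (- {0 :: 'a}) \<le> card (\<Union>z\<in>?Q. {y. y ^ 2 = z})"
    by (intro card_mono) auto
  also have "\<dots> \<le> (\<Sum>z\<in>?Q. card {y. y ^ 2 = z})"
    by (rule card_UN_le) simp
  also have "\<dots> \<le> (\<Sum>z\<in>?Q. 2)"
    by (intro sum_mono) (auto simp: square_roots)
  finally show ?thesis
    by simp
qed

lemma nonsquare_mult_nonsquare_is_square: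
  fixes u v :: "'a::{field,finite}"
  assumes u: "\<not> (\<exists>y. u = y ^ 2)" and v: "\<not> (\<exists>y. v = y ^ 2)"
  shows "\<exists>t. u * v = t ^ 2"
proof (rule ccontr)
  assume uv: "\<not> (\<exists>t. u * v = t ^ 2)"
  let ?Q = "(\<lambda>y. y ^ 2) ` (- {0 :: 'a})"
  have "u \<noteq> 0"
    using u by (metis power_zero_numeral)
  have "(*) u ` ?Q \<inter> ?Q = {}"
  proof (rule ccontr)
    assume "(*) u ` ?Q \<inter> ?Q \<noteq> {}"
    then obtain a b where "a \<noteq> 0" and "u * a ^ 2 = b ^ 2"
      by auto
    then have "u = (b / a) ^ 2"
      by (simp add: power_divide eq_divide_eq)
    with u show False
      by blast
  qed
  moreover have "v \<notin> (*) u ` ?Q \<union> ?Q"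
  proof
    assume "v \<in> (*) u ` ?Q \<union> ?Q"
    then consider a where "v = u * a ^ 2" | a where "v = a ^ 2"
      by auto
    then show False
    proof cases
      case 1
      then have "u * v = (u * a) ^ 2"
        by (simp add: power2_eq_square)
      with uv show False
        by blast
    qed (use v in blast)
  qed
  moreover have "inj_on ((*) u) ?Q"
    using \<open>u \<noteq> 0\<close> by (auto intro: inj_onI)
  ultimately have "card (insert v ((*) u ` ?Q \<union> ?Q)) = 2 * card ?Q + 1"
    by (simp add: card_Un_disjoint card_image)
  moreover have "insert v ((*) u ` ?Q \<union> ?Q) \<subseteq> - {0}"
    using \<open>u \<noteq> 0\<close> v by (auto simp flip: power_zero_numeral)
  then have "card (insert v ((*) u ` ?Q \<union> ?Q)) \<le> card (- {0 :: 'a})"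
    by (intro card_mono) auto
  ultimately show False
    using card_nonzero_le_double_card_nonzero_squares[where 'a = 'a] by simp
qed

lemma mult_field_automorphism_image_is_square:
  fixes u :: "'a::{field,finite}"
  assumes "field_automorphism \<sigma>"
  shows "\<exists>t. u * \<sigma> u = t ^ 2"
proof (cases "\<exists>w. u = w ^ 2")
  case True
  then obtain w where "u = w ^ 2" ..
  then have "u * \<sigma> u = (w * \<sigma> w) ^ 2"
    using assms by (simp add: field_automorphism_power power_mult_distrib)
  then show ?thesis ..
next
  case False
  then show ?thesis
    using assms by (simp add: nonsquare_mult_nonsquare_is_square field_automorphism_square_iff)
qed

lemma square_if_even_power_mult_eq:
  fixes \<alpha> :: "'a::{field,finite}"
  assumes "field_automorphism \<sigma>" and "even n" and "b \<noteq> 0" and "u \<noteq> 0"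
    and "a ^ n * u = \<alpha> * \<sigma> b ^ n * \<sigma> u"
  shows "\<exists>y. \<alpha> = y ^ 2"
proof -
  obtain r where n: "n = 2 * r"
    using assms(2) by blast
  obtain t where t: "u * \<sigma> u = t ^ 2"
    using mult_field_automorphism_image_is_square assms(1) by blast
  have "\<alpha> * (\<sigma> b ^ r * \<sigma> u) ^ 2 = \<alpha> * \<sigma> b ^ n * \<sigma> u * \<sigma> u"
    by (simp add: n power_mult_distrib power2_eq_square power_mult mult_ac)
  also have "\<dots> = a ^ n * (u * \<sigma> u)"
    by (simp add: assms(5) flip: mult.assoc)
  also have "\<dots> = (a ^ r * t) ^ 2"
    by (simp add: n t power_mult_distrib power_mult mult_ac)
  finally have "\<alpha> = (a ^ r * t / (\<sigma> b ^ r * \<sigma> u)) ^ 2"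
    using assms(1,3,4) by (simp add: power_divide eq_divide_eq field_automorphism_eq_0_iff)
  then show ?thesis ..
qed

lemma star_mult_add_left:
  assumes "prime p" and "CHAR('a::field) = p" and "field_automorphism \<sigma>"
  shows "star_mult p k \<alpha> \<sigma> (x + y) z = star_mult p k \<alpha> \<sigma> x z + star_mult p k (\<alpha> :: 'a) \<sigma> y z"
  using assms
  by (cases x; cases y; cases z)
     (simp add: star_mult_def circ_k_add_left field_automorphism_add algebra_simps)

lemma star_mult_add_right:
  assumes "prime p" and "CHAR('a::field) = p" and "field_automorphism \<sigma>"
  shows "star_mult p k \<alpha> \<sigma> z (x + y) = star_mult p k \<alpha> \<sigma> z x + star_mult p k (\<alpha> :: 'a) \<sigma> z y"
  using assms
  by (cases x; cases y; cases z)
     (simp add: star_mult_def circ_k_add_right field_automorphism_add algebra_simps)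

lemma star_mult_eq_0_imp_right_eq_0:
  fixes \<alpha> :: "'a::{field,finite}"
  assumes "odd p" and frobenius: "\<And>z :: 'a. z ^ (p ^ k) = - z \<Longrightarrow> z = 0"
    and nonsquare: "\<not> (\<exists>y. \<alpha> = y ^ 2)" and \<sigma>: "field_automorphism \<sigma>"
    and "a \<noteq> 0" and "star_mult p k \<alpha> \<sigma> (a, b) (c, d) = 0"
  shows "(c, d) = 0"
proof -
  have first: "circ_k p k a c + \<alpha> * \<sigma> (circ_k p k b d) = 0"
    and second: "a * d + b * c = 0"
    using assms(6) by (simp_all add: star_mult_def zero_prod_def)
  define s where "s = c / a"
  define u where "u = s + s ^ (p ^ k)"
  have c: "c = a * s" and d: "d = - (b * s)"
    using \<open>a \<noteq> 0\<close> second by (simp_all add: s_def field_simps eq_neg_iff_add_eq_0)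
  have "circ_k p k a c = a ^ (p ^ k) * a * u"
    by (simp add: c u_def circ_k_mult_right_self)
  moreover have "\<sigma> (circ_k p k b d) = - (\<sigma> b ^ (p ^ k) * \<sigma> b * \<sigma> u)"
    using \<sigma> by (simp add: d u_def circ_k_mult_right_self_neg[OF assms(1)]
        field_automorphism_minus field_automorphism_mult field_automorphism_power)
  ultimately have "a ^ (p ^ k) * a * u = \<alpha> * (\<sigma> b ^ (p ^ k) * \<sigma> b * \<sigma> u)"
    using first by (simp add: add_eq_0_iff2)
  then have twisted: "a ^ (p ^ k + 1) * u = \<alpha> * \<sigma> b ^ (p ^ k + 1) * \<sigma> u"
    by (simp add: mult_ac)
  show ?thesis
  proof (cases "u = 0")
    case True
    then have "s ^ (p ^ k) = - s"
      by (simp add: u_def eq_neg_iff_add_eq_0 add.commute)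
    then have "s = 0"
      by (rule frobenius)
    then show ?thesis
      by (simp add: c d zero_prod_def)
  next
    case False
    have "b \<noteq> 0"
      using twisted \<open>a \<noteq> 0\<close> False \<sigma> by (auto simp: field_automorphism_zero)
    then have "\<exists>y. \<alpha> = y ^ 2"
      using square_if_even_power_mult_eq[OF \<sigma> _ _ False twisted] assms(1) by simp
    with nonsquare show ?thesis
      by blast
  qed
qed

lemma star_mult_eq_0_imp:
  fixes \<alpha> :: "'a::{field,finite}"
  assumes "odd p" and frobenius: "\<And>z :: 'a. z ^ (p ^ k) = - z \<Longrightarrow> z = 0"
    and nonsquare: "\<not> (\<exists>y. \<alpha> = y ^ 2)" and \<sigma>: "field_automorphism \<sigma>"
    and "star_mult p k \<alpha> \<sigma> (a, b) (c, d) = 0"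
  shows "(a, b) = 0 \<or> (c, d) = 0"
proof (cases "a = 0")
  case True
  show ?thesis
  proof (cases "b = 0")
    case False
    have first: "circ_k p k a c + \<alpha> * \<sigma> (circ_k p k b d) = 0"
      and second: "a * d + b * c = 0"
      using assms(5) by (simp_all add: star_mult_def zero_prod_def)
    then have "c = 0"
      using True False by simp
    moreover have "\<alpha> \<noteq> 0"
      using nonsquare by (metis power_zero_numeral)
    moreover have "p \<noteq> 0"
      using assms(1) by presburger
    ultimately have "circ_k p k b d = 0"
      using first True \<sigma> by (simp add: circ_k_def field_automorphism_eq_0_iff)
    then have "d = 0"
      using circ_k_eq_0_imp[OF frobenius] False by blast
    with \<open>c = 0\<close> show ?thesis
      by (simp add: zero_prod_def)
  qed (simp add: True zero_prod_def)
qed (use star_mult_eq_0_imp_right_eq_0[OF assms(1-4) _ assms(5)] in blast)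

theorem theorem1:
  fixes p m k :: nat and \<alpha> :: "'a::{field,finite}" and \<sigma> :: "'a \<Rightarrow> 'a"
  assumes "prime p" and "odd p"
    and "m > 0" and "k > 0"
    and "card (UNIV :: 'a set) = p ^ m"
    and "odd (m div gcd m k)"
    and "\<not> (\<exists>y. \<alpha> = y ^ 2)"
    and "field_automorphism \<sigma>"
  shows "presemifield (star_mult p k \<alpha> \<sigma>)"
proof -
  have char: "CHAR('a) = p"
    using assms(1,5) by (rule CHAR_eq_if_card_eq_prime_power)
  have frobenius: "z = 0" if "z ^ (p ^ k) = - z" for z :: 'a
    using assms(1,2,5,6) that by (rule frobenius_eq_neg_imp_zero)
  show ?thesis
    unfolding presemifield_def
  proof (intro conjI allI impI)
    fix x y z :: "'a \<times> 'a"
    show "star_mult p k \<alpha> \<sigma> (x + y) z = star_mult p k \<alpha> \<sigma> x z + star_mult p k \<alpha> \<sigma> y z"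
      using assms(1) char assms(8) by (rule star_mult_add_left)
    show "star_mult p k \<alpha> \<sigma> x (y + z) = star_mult p k \<alpha> \<sigma> x y + star_mult p k \<alpha> \<sigma> x z"
      using assms(1) char assms(8) by (rule star_mult_add_right)
  next
    fix x y :: "'a \<times> 'a"
    assume "star_mult p k \<alpha> \<sigma> x y = 0"
    then show "x = 0 \<or> y = 0"
      using star_mult_eq_0_imp[OF assms(2) frobenius assms(7,8)] by (cases x; cases y) blast
  qed simp
qed

end
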